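(* Let $f(a,b,c,d,e,x,y)$ be analytic in a neighbourhood of the origin of $\mathbb{C}^7$. Suppose that, with $F(X,Y)=f(a,b,c,d,e,X,Y)$, $f$ satisfies in a neighbourhood of the origin the equation $$x\Big\{F(x,y)-F(x,yq)-(d+e)q^{-1}\big[F(x,yq)-F(x,yq^2)\big]+de\,q^{-2}\big[F(x,yq^2)-F(x,yq^3)\big]\Big\}$$ $$=y\Big\{\big[F(x,y)-F(xq,y)\big]-(a+b+c)\big[F(x,yq)-F(xq,yq)\big]+(ab+ac+bc)\big[F(x,yq^2)-F(xq,yq^2)\big]-abc\big[F(x,yq^3)-F(xq,yq^3)\big]\Big\}.$$ Then, in some neighbourhood of the origin, $$f(a,b,c,d,e,x,y)=\mathbb{T}(a,b,c,d,e,yD_x)\{f(a,b,c,d,e,x,0)\}=\sum_{n\ge0}\frac{(a,b,c;q)_n}{(q,d,e;q)_n}\,y^n\,D_x^n\{f(a,b,c,d,e,x,0)\},$$ and the series converges there.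
   Context: Throughout, $0<q<1$. $(\alpha;q)_0=1$, $(\alpha;q)_n=\prod_{j=0}^{n-1}(1-\alpha q^j)$, and $(\alpha_1,\dots,\alpha_r;q)_n=\prod_i(\alpha_i;q)_n$. $D_x$ is the $q$-derivative acting on the variable $x$ with all other variables fixed: $D_x\{g(x)\}=\frac{g(x)-g(xq)}{x}$. For a function analytic at $0$, $D_x$ acts termwise on the power series, $D_x\{x^m\}=(1-q^m)x^{m-1}$, which gives the value at $x=0$ by continuity. The operator is $\mathbb{T}(a,b,c,d,e,yD_x)=\sum_{n\ge0}\frac{(a,b,c;q)_n}{(q,d,e;q)_n}(yD_x)^n$. *)

theory Defs
  imports "HOL-Analysis.Analysis"
begin

definition qpoch :: "complex \<Rightarrow> real \<Rightarrow> nat \<Rightarrow> complex" where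
  "qpoch \<alpha> q n = (\<Prod>j<n. 1 - \<alpha> * of_real q ^ j)"

definition qD :: "real \<Rightarrow> (complex \<Rightarrow> complex) \<Rightarrow> complex \<Rightarrow> complex" where
  "qD q g x = (if x = 0 then Lim (at 0) (\<lambda>t. (g t - g (of_real q * t)) / t)
               else (g x - g (of_real q * x)) / x)"

text \<open>Analyticity at the origin of C^n: in some polydisc around 0, g is the (unconditionally,
  hence absolutely) convergent sum of a power series in the n variables z 0, ..., z (n-1).\<close>
definition analytic_at_origin :: "nat \<Rightarrow> ((nat \<Rightarrow> complex) \<Rightarrow> complex) \<Rightarrow> bool" where
  "analytic_at_origin n g \<longleftrightarrow>
     (\<exists>r>0. \<exists>c :: (nat \<Rightarrow> nat) \<Rightarrow> complex. \<forall>z. (\<forall>i<n. norm (z i) < r) \<longrightarrow>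
        ((\<lambda>\<alpha>. c \<alpha> * (\<Prod>i<n. z i ^ \<alpha> i)) has_sum g z) {\<alpha>. \<forall>i\<ge>n. \<alpha> i = 0})"

definition analytic7 ::
  "(complex \<Rightarrow> complex \<Rightarrow> complex \<Rightarrow> complex \<Rightarrow> complex \<Rightarrow> complex \<Rightarrow> complex \<Rightarrow> complex) \<Rightarrow> bool" where
  "analytic7 f \<longleftrightarrow> analytic_at_origin 7 (\<lambda>z. f (z 0) (z 1) (z 2) (z 3) (z 4) (z 5) (z 6))"

end

theory Submission
  imports Defs
begin

text \<open>
  Write F(x, y) = sum_n A_n(x) y^n. The substitution y -> y q^j multiplies A_n by q^(j n), so
  comparing the coefficients of y^(n+1) on both sides of the equation gives
    x (1 - q^(n+1)) (1 - d q^n) (1 - e q^n) A_(n+1)(x) = (1 - a q^n) (1 - b q^n) (1 - c q^n) (A_n(x) - A_n(x q)).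
  Hence B_n = A_n / P_n, with P_n = (a,b,c;q)_n / (q,d,e;q)_n, satisfies x B_(n+1)(x) = B_n(x) - B_n(x q),
  i.e. B_(n+1) = D_x B_n (at x = 0 by continuity of the power series A_(n+1)), and B_0 = F(-, 0).
  So A_n = P_n D_x^n F(-, 0), which is the claimed expansion.
\<close>

lemma qpoch_0 [simp]: "qpoch \<alpha> q 0 = 1"
  by (simp add: qpoch_def)

lemma qpoch_Suc: "qpoch \<alpha> q (Suc n) = qpoch \<alpha> q n * (1 - \<alpha> * of_real q ^ n)"
  by (simp add: qpoch_def)

lemma qpoch_nonzero:
  assumes "norm \<alpha> < 1" "0 \<le> q" "q \<le> 1"
  shows "qpoch \<alpha> q n \<noteq> 0"
proof -
  have "norm (\<alpha> * of_real q ^ j) < 1" for j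
  proof -
    have "norm (\<alpha> * of_real q ^ j) = norm \<alpha> * q ^ j"
      using assms by (simp add: norm_mult norm_power)
    also have "\<dots> \<le> norm \<alpha>"
      using assms by (simp add: mult_left_le power_le_one)
    finally show ?thesis using assms(1) by simp
  qed
  then show ?thesis
    unfolding qpoch_def by (auto simp: prod_zero_iff) (metis norm_one less_irrefl)
qed

lemma powser_sums_0_imp_coeff_0:
  fixes u :: "nat \<Rightarrow> 'a::{real_normed_field,banach}"
  assumes "s > 0" and sums0: "\<And>y. norm y < s \<Longrightarrow> (\<lambda>n. u n * y^n) sums 0"
  shows "u n = 0"
proof (induction n rule: less_induct)
  case (less n)
  have "(\<lambda>k. u (k + n) * y^k) sums 0" if "y \<noteq> 0" "norm y < s" for y
  proof -
    have "(\<lambda>k. u (k + n) * y^(k + n)) sums 0"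
      using sums_zero_iff_shift[of n "\<lambda>i. u i * y^i" 0] sums0 that less by simp
    then have "(\<lambda>k. u (k + n) * y^(k + n) / y^n) sums (0 / y^n)"
      by (rule sums_divide)
    with that show ?thesis by (simp add: power_add)
  qed
  then have "((\<lambda>_. 0) \<longlongrightarrow> u n) (at (0::'a))"
    using powser_limit_0_strong[OF \<open>s > 0\<close>, of "\<lambda>k. u (k + n)" "\<lambda>_. 0"] by simp
  then show "u n = 0"
    using LIM_const_eq by fastforce
qed

lemma powser_coeff_Suc_eq_of_sums_eq_mult:
  fixes L M :: "nat \<Rightarrow> 'a::{real_normed_field,banach}"
  assumes "s > 0"
    and "\<And>y. norm y < s \<Longrightarrow> (\<lambda>n. L n * y^n) sums S y"
    and "\<And>y. norm y < s \<Longrightarrow> (\<lambda>n. M n * y^n) sums T y"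
    and "\<And>y. norm y < s \<Longrightarrow> S y = y * T y"
  shows "L (Suc k) = M k"
proof -
  define u where "u n = L n - (if n = 0 then 0 else M (n - 1))" for n
  have "(\<lambda>n. u n * y^n) sums 0" if "norm y < s" for y
  proof -
    have "(\<lambda>n. y * (M n * y^n)) sums (y * T y)"
      using assms(3)[OF that] by (rule sums_mult)
    then have "(\<lambda>n. (\<lambda>n. (if n = 0 then 0 else M (n - 1)) * y^n) (Suc n)) sums (y * T y)"
      by (simp add: mult_ac)
    then have "(\<lambda>n. (if n = 0 then 0 else M (n - 1)) * y^n) sums (y * T y)"
      by (subst (asm) sums_Suc_iff) simp
    from sums_diff[OF assms(2)[OF that] this] show ?thesis
      using assms(4)[OF that] by (simp add: u_def algebra_simps)
  qed
  from powser_sums_0_imp_coeff_0[OF \<open>s > 0\<close> this, of "Suc k"] show ?thesis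
    by (simp add: u_def)
qed

lemma analytic7_double_power_series:
  assumes "analytic7 f"
  obtains r and C :: "complex \<Rightarrow> complex \<Rightarrow> complex \<Rightarrow> complex \<Rightarrow> complex \<Rightarrow> nat \<Rightarrow> nat \<Rightarrow> complex"
  where "r > 0"
    "\<And>a b c d e x y. norm a < r \<Longrightarrow> norm b < r \<Longrightarrow> norm c < r \<Longrightarrow> norm d < r \<Longrightarrow> norm e < r
       \<Longrightarrow> norm x < r \<Longrightarrow> norm y < r
       \<Longrightarrow> ((\<lambda>(n, m). C a b c d e n m * x^m * y^n) has_sum f a b c d e x y) UNIV"
proof -
  define S where "S = {\<alpha>::nat \<Rightarrow> nat. \<forall>i\<ge>7. \<alpha> i = 0}"
  from assms obtain r cc where "r > 0" and series: "\<And>z. (\<forall>i<7. norm (z i) < r) \<Longrightarrow>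
      ((\<lambda>\<alpha>. cc \<alpha> * (\<Prod>i<7. z i ^ \<alpha> i)) has_sum f (z 0) (z 1) (z 2) (z 3) (z 4) (z 5) (z 6)) S"
    unfolding analytic7_def analytic_at_origin_def S_def by blast
  define w where "w a b c d e \<alpha> = a^\<alpha> 0 * b^\<alpha> 1 * c^\<alpha> 2 * d^\<alpha> 3 * e^\<alpha> 4"
    for a b c d e :: complex and \<alpha> :: "nat \<Rightarrow> nat"
  define C where "C a b c d e n m = (\<Sum>\<^sub>\<infinity>\<alpha>\<in>{\<alpha>\<in>S. \<alpha> 6 = n \<and> \<alpha> 5 = m}. cc \<alpha> * w a b c d e \<alpha>)"
    for a b c d e :: complex and n m :: nat
  show thesis
  proof (rule that[OF \<open>r > 0\<close>])
    fix a b c d e x y :: complex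
    assume "norm a < r" "norm b < r" "norm c < r" "norm d < r" "norm e < r" "norm x < r" "norm y < r"
    then have "\<forall>i<7. norm ((\<lambda>i. [a, b, c, d, e, x, y] ! i) i) < r"
      by (auto simp: less_Suc_eq numeral_eq_Suc)
    from series[OF this] have full:
      "((\<lambda>\<alpha>. cc \<alpha> * w a b c d e \<alpha> * x^\<alpha> 5 * y^\<alpha> 6) has_sum f a b c d e x y) S"
      by (simp add: w_def eval_nat_numeral lessThan_Suc mult_ac)
    define \<phi> where "\<phi> = (\<lambda>(p::nat \<times> nat, \<alpha>). cc \<alpha> * w a b c d e \<alpha> * x^\<alpha> 5 * y^\<alpha> 6)"
    define h where "h = (\<lambda>\<alpha>::nat \<Rightarrow> nat. ((\<alpha> 6, \<alpha> 5), \<alpha>))"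
    have "inj_on h S"
      by (auto simp: inj_on_def h_def)
    moreover have "h ` S = Sigma UNIV (\<lambda>p. {\<alpha>\<in>S. \<alpha> 6 = fst p \<and> \<alpha> 5 = snd p})"
      by (auto simp: h_def image_iff)
    ultimately have grouped: "(\<phi> has_sum f a b c d e x y) (Sigma UNIV (\<lambda>p. {\<alpha>\<in>S. \<alpha> 6 = fst p \<and> \<alpha> 5 = snd p}))"
      using has_sum_reindex[of h S \<phi>] full by (simp add: \<phi>_def h_def o_def)
    have "((\<lambda>p. C a b c d e (fst p) (snd p) * x^snd p * y^fst p) has_sum f a b c d e x y) UNIV"
    proof (rule has_sum_SigmaD[OF grouped])
      fix p :: "nat \<times> nat"
      obtain n m where p: "p = (n, m)" by force
      let ?B = "{\<alpha>\<in>S. \<alpha> 6 = n \<and> \<alpha> 5 = m}"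
      have "(\<lambda>\<alpha>. cc \<alpha> * w a b c d e \<alpha> * x^\<alpha> 5 * y^\<alpha> 6) summable_on ?B"
        by (rule summable_on_subset_banach[OF has_sum_imp_summable[OF full]]) auto
      then have "(\<lambda>\<alpha>. cc \<alpha> * w a b c d e \<alpha> * (x^m * y^n)) summable_on ?B"
        by (rule summable_on_cong[THEN iffD1, rotated]) auto
      then have "((\<lambda>\<alpha>. cc \<alpha> * w a b c d e \<alpha> * (x^m * y^n)) has_sum C a b c d e n m * (x^m * y^n)) ?B"
        using has_sum_infsum by (fastforce simp: C_def infsum_cmult_left')
      then have "((\<lambda>\<alpha>. \<phi> (p, \<alpha>)) has_sum C a b c d e n m * (x^m * y^n)) ?B"
        by (rule has_sum_cong[THEN iffD1, rotated]) (auto simp: \<phi>_def p)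
      then show "((\<lambda>\<alpha>. \<phi> (p, \<alpha>)) has_sum C a b c d e (fst p) (snd p) * x^snd p * y^fst p)
          {\<alpha>\<in>S. \<alpha> 6 = fst p \<and> \<alpha> 5 = snd p}"
        by (simp add: p mult.assoc)
    qed
    then show "((\<lambda>(n, m). C a b c d e n m * x^m * y^n) has_sum f a b c d e x y) UNIV"
      by (simp add: case_prod_beta')
  qed
qed

lemma has_sum_power_series_rows:
  fixes C :: "nat \<Rightarrow> nat \<Rightarrow> complex"
  assumes double: "((\<lambda>(n, m). C n m * x^m * y^n) has_sum g) UNIV"
  shows "y \<noteq> 0 \<Longrightarrow> (\<lambda>m. C n m * x^m) summable_on UNIV"
    and "((\<lambda>n. (\<Sum>\<^sub>\<infinity>m. C n m * x^m) * y^n) has_sum g) UNIV"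
proof -
  from double have "((\<lambda>(n, m). C n m * x^m * y^n) has_sum g) (UNIV \<times> UNIV)"
    by simp
  note double' = this
  have row: "(\<lambda>m. C n m * x^m * y^n) summable_on UNIV" for n
    using summable_on_SigmaD1[OF has_sum_imp_summable[OF double']] by simp
  then show "y \<noteq> 0 \<Longrightarrow> (\<lambda>m. C n m * x^m) summable_on UNIV"
    by (simp add: summable_on_cmult_left')
  show "((\<lambda>n. (\<Sum>\<^sub>\<infinity>m. C n m * x^m) * y^n) has_sum g) UNIV"
    by (rule has_sum_SigmaD[OF double']) (use has_sum_infsum[OF row] in \<open>auto simp: infsum_cmult_left'\<close>)
qed

lemma analytic7_power_series_in_y:
  assumes "analytic7 f"
  obtains r and A :: "complex \<Rightarrow> complex \<Rightarrow> complex \<Rightarrow> complex \<Rightarrow> complex \<Rightarrow> nat \<Rightarrow> complex \<Rightarrow> complex"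
  where "r > 0"
    "\<And>a b c d e n. norm a < r \<Longrightarrow> norm b < r \<Longrightarrow> norm c < r \<Longrightarrow> norm d < r \<Longrightarrow> norm e < r
       \<Longrightarrow> isCont (A a b c d e n) 0"
    "\<And>a b c d e x y. norm a < r \<Longrightarrow> norm b < r \<Longrightarrow> norm c < r \<Longrightarrow> norm d < r \<Longrightarrow> norm e < r
       \<Longrightarrow> norm x < r \<Longrightarrow> norm y < r \<Longrightarrow> (\<lambda>n. A a b c d e n x * y^n) sums f a b c d e x y"
proof -
  obtain r C where "r > 0" and double: "\<And>a b c d e x y. norm a < r \<Longrightarrow> norm b < r \<Longrightarrow> norm c < r
      \<Longrightarrow> norm d < r \<Longrightarrow> norm e < r \<Longrightarrow> norm x < r \<Longrightarrow> norm y < r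
      \<Longrightarrow> ((\<lambda>(n, m). C a b c d e n m * x^m * y^n) has_sum f a b c d e x y) UNIV"
    using analytic7_double_power_series[OF assms] by blast
  define A where "A = (\<lambda>a b c d e n x. \<Sum>m. C a b c d e n m * x^m)"
  define y0 :: complex where "y0 = of_real (r / 2)"
  have y0: "norm y0 < r" "y0 \<noteq> 0"
    using \<open>r > 0\<close> by (auto simp: y0_def)
  have row: "((\<lambda>m. C a b c d e n m * x^m) has_sum A a b c d e n x) UNIV"
    if "norm a < r" "norm b < r" "norm c < r" "norm d < r" "norm e < r" "norm x < r"
    for a b c d e x :: complex and n
  proof -
    from has_sum_power_series_rows(1)[OF double[OF that y0(1)] y0(2)]
    have "((\<lambda>m. C a b c d e n m * x^m) has_sum (\<Sum>\<^sub>\<infinity>m. C a b c d e n m * x^m)) UNIV"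
      by (rule has_sum_infsum)
    moreover from has_sum_imp_sums[OF this] have "(\<Sum>\<^sub>\<infinity>m. C a b c d e n m * x^m) = A a b c d e n x"
      by (simp add: A_def sums_iff)
    ultimately show ?thesis by simp
  qed
  show thesis
  proof (rule that[of r A, OF \<open>r > 0\<close>])
    fix a b c d e :: complex and n :: nat
    assume params: "norm a < r" "norm b < r" "norm c < r" "norm d < r" "norm e < r"
    have "summable (\<lambda>m. C a b c d e n m * y0^m)"
      using has_sum_imp_sums[OF row[OF params y0(1)]] by (rule sums_summable)
    then show "isCont (A a b c d e n) 0"
      unfolding A_def by (rule isCont_powser) (use y0 in simp)
  next
    fix a b c d e x y :: complex
    assume all: "norm a < r" "norm b < r" "norm c < r" "norm d < r" "norm e < r" "norm x < r" "norm y < r"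
    have "(\<Sum>\<^sub>\<infinity>m. C a b c d e n m * x^m) = A a b c d e n x" for n
      using row[OF all(1-6)] by (rule infsumI)
    with has_sum_power_series_rows(2)[OF double[OF all]]
    have "((\<lambda>n. A a b c d e n x * y^n) has_sum f a b c d e x y) UNIV"
      by simp
    then show "(\<lambda>n. A a b c d e n x * y^n) sums f a b c d e x y"
      by (rule has_sum_imp_sums)
  qed
qed

lemma qD_eqI:
  assumes "r > 0" "norm t < r" "isCont G 0"
    and quotient: "\<And>s. s \<noteq> 0 \<Longrightarrow> norm s < r \<Longrightarrow> (g s - g (of_real q * s)) / s = G s"
  shows "qD q g t = G t"
proof (cases "t = 0")
  case False
  with assms show ?thesis by (simp add: qD_def)
next
  case True
  have "(G \<longlongrightarrow> G 0) (at 0)"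
    using \<open>isCont G 0\<close> by (simp add: isCont_def)
  then have "((\<lambda>s. (g s - g (of_real q * s)) / s) \<longlongrightarrow> G 0) (at 0)"
    by (rule Lim_transform_within[OF _ \<open>r > 0\<close>]) (auto simp: quotient dist_norm)
  with True show ?thesis
    by (simp add: qD_def tendsto_Lim)
qed

lemma qD_iterate_eq:
  fixes B :: "nat \<Rightarrow> complex \<Rightarrow> complex"
  assumes "0 \<le> q" "q \<le> 1" "r > 0"
    and cont: "\<And>n. isCont (B n) 0"
    and base: "\<And>t. norm t < r \<Longrightarrow> B 0 t = g t"
    and step: "\<And>n t. norm t < r \<Longrightarrow> t * B (Suc n) t = B n t - B n (of_real q * t)"
  shows "norm t < r \<Longrightarrow> (qD q ^^ n) g t = B n t"
proof (induction n arbitrary: t)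
  case 0
  then show ?case by (simp add: base)
next
  case (Suc n)
  have contract: "norm (of_real q * s) < r" if "norm s < r" for s :: complex
    using that assms(1,2) mult_left_le_one_le[of "norm s" q]
    by (simp add: norm_mult abs_of_nonneg)
  show ?case
  proof (simp, rule qD_eqI[OF \<open>r > 0\<close> Suc.prems cont])
    fix s :: complex
    assume "s \<noteq> 0" "norm s < r"
    then show "((qD q ^^ n) g s - (qD q ^^ n) g (of_real q * s)) / s = B (Suc n) s"
      using Suc.IH contract step[of s n] by (simp add: field_simps)
  qed
qed

definition q_difference_equation ::
  "complex \<Rightarrow> complex \<Rightarrow> complex \<Rightarrow> complex \<Rightarrow> complex \<Rightarrow> complex \<Rightarrow>
   (complex \<Rightarrow> complex \<Rightarrow> complex) \<Rightarrow> complex \<Rightarrow> complex \<Rightarrow> bool" where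
  "q_difference_equation Q a b c d e F x y \<longleftrightarrow>
     x * (F x y - F x (y*Q) - (d + e) / Q * (F x (y*Q) - F x (y*Q^2))
          + d * e / Q^2 * (F x (y*Q^2) - F x (y*Q^3)))
   = y * ((F x y - F (x*Q) y)
          - (a + b + c) * (F x (y*Q) - F (x*Q) (y*Q))
          + (a*b + a*c + b*c) * (F x (y*Q^2) - F (x*Q) (y*Q^2))
          - a*b*c * (F x (y*Q^3) - F (x*Q) (y*Q^3)))"

lemma q_difference_equation_coeff_recurrence:
  fixes A :: "nat \<Rightarrow> complex \<Rightarrow> complex" and Q :: complex
  assumes "Q \<noteq> 0" "norm Q \<le> 1" "R > 0"
    and rep: "\<And>x y. norm x < R \<Longrightarrow> norm y < R \<Longrightarrow> (\<lambda>n. A n x * y^n) sums F x y"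
    and eq: "\<And>x y. norm x < R \<Longrightarrow> norm y < R \<Longrightarrow> q_difference_equation Q a b c d e F x y"
    and x: "norm x < R"
  shows "x * A (Suc k) x * ((1 - Q^Suc k) * (1 - d*Q^k) * (1 - e*Q^k))
       = (A k x - A k (x*Q)) * ((1 - a*Q^k) * (1 - b*Q^k) * (1 - c*Q^k))"
proof -
  have xQ: "norm (x*Q) < R"
    using x \<open>norm Q \<le> 1\<close> mult_left_le[of "norm Q" "norm x"] by (simp add: norm_mult)
  have dilate: "(\<lambda>n. A n s * (Q^j)^n * y^n) sums F s (y*Q^j)"
    if "norm s < R" "norm y < R" for s y j
  proof -
    have "norm (y*Q^j) \<le> norm y"
      using \<open>norm Q \<le> 1\<close> by (simp add: norm_mult norm_power mult_left_le power_le_one)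
    with rep[of s "y*Q^j"] that show ?thesis
      by (simp add: power_mult_distrib mult_ac)
  qed
  define L where "L n = x * A n x * (1 - Q^n - (d+e)/Q * (Q^n - (Q^2)^n) + d*e/Q^2 * ((Q^2)^n - (Q^3)^n))"
    for n
  define M where "M n = (A n x - A n (x*Q)) * (1 - (a+b+c) * Q^n + (a*b+a*c+b*c) * (Q^2)^n - a*b*c * (Q^3)^n)"
    for n
  have "L (Suc k) = M k"
  proof (rule powser_coeff_Suc_eq_of_sums_eq_mult[OF \<open>R > 0\<close>])
    fix y :: complex
    assume y: "norm y < R"
    note series = dilate[OF x y, of 1] dilate[OF x y, of 2] dilate[OF x y, of 3]
      dilate[OF xQ y, of 1] dilate[OF xQ y, of 2] dilate[OF xQ y, of 3] rep[OF x y] rep[OF xQ y]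
    show "(\<lambda>n. L n * y^n) sums
      (x * (F x y - F x (y*Q) - (d + e) / Q * (F x (y*Q) - F x (y*Q^2))
            + d * e / Q^2 * (F x (y*Q^2) - F x (y*Q^3))))"
      using sums_mult[OF sums_add[OF sums_diff[OF sums_diff[OF series(7) series(1)]
          sums_mult[OF sums_diff[OF series(1) series(2)]]]
          sums_mult[OF sums_diff[OF series(2) series(3)]]], of x "(d+e)/Q" "d*e/Q^2"]
      by (simp add: L_def algebra_simps)
    show "(\<lambda>n. M n * y^n) sums
      ((F x y - F (x*Q) y) - (a + b + c) * (F x (y*Q) - F (x*Q) (y*Q))
       + (a*b + a*c + b*c) * (F x (y*Q^2) - F (x*Q) (y*Q^2))
       - a*b*c * (F x (y*Q^3) - F (x*Q) (y*Q^3)))"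
      using sums_diff[OF sums_add[OF sums_diff[OF sums_diff[OF series(7) series(8)]
          sums_mult[OF sums_diff[OF series(1) series(4)]]]
          sums_mult[OF sums_diff[OF series(2) series(5)]]]
          sums_mult[OF sums_diff[OF series(3) series(6)]], of "a+b+c" "a*b+a*c+b*c" "a*b*c"]
      by (simp add: M_def algebra_simps)
  qed (use eq[OF x] in \<open>simp add: q_difference_equation_def\<close>)
  moreover have "(Q^j)^Suc k = Q^j * (Q^k)^j" for j
    by (simp add: power_mult[symmetric] mult.commute power_mult_distrib)
  then have "1 - Q^Suc k - (d+e)/Q * (Q^Suc k - (Q^2)^Suc k) + d*e/Q^2 * ((Q^2)^Suc k - (Q^3)^Suc k)
      = (1 - Q^Suc k) * (1 - d*Q^k) * (1 - e*Q^k)"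
    using \<open>Q \<noteq> 0\<close> by (simp add: field_simps power2_eq_square power3_eq_cube)
  moreover have "1 - (a+b+c) * Q^k + (a*b+a*c+b*c) * (Q^2)^k - a*b*c * (Q^3)^k
      = (1 - a*Q^k) * (1 - b*Q^k) * (1 - c*Q^k)"
    by (simp add: power_mult[symmetric] mult.commute[of _ k] power_mult algebra_simps
        power2_eq_square power3_eq_cube)
  ultimately show ?thesis
    by (simp add: L_def M_def)
qed

lemma q_difference_equation_expansion:
  fixes F :: "complex \<Rightarrow> complex \<Rightarrow> complex" and A :: "nat \<Rightarrow> complex \<Rightarrow> complex"
  assumes q: "0 < q" "q < 1" and "R > 0"
    and params: "norm a < 1" "norm b < 1" "norm c < 1" "norm d < 1" "norm e < 1"
    and cont: "\<And>n. isCont (A n) 0"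
    and rep: "\<And>x y. norm x < R \<Longrightarrow> norm y < R \<Longrightarrow> (\<lambda>n. A n x * y^n) sums F x y"
    and eq: "\<And>x y. norm x < R \<Longrightarrow> norm y < R \<Longrightarrow> q_difference_equation (of_real q) a b c d e F x y"
    and xy: "norm x < R" "norm y < R"
  shows "(\<lambda>n. qpoch a q n * qpoch b q n * qpoch c q n
              / (qpoch (of_real q) q n * qpoch d q n * qpoch e q n)
            * y^n * (qD q ^^ n) (\<lambda>t. F t 0) x) sums F x y"
proof -
  define Q where "Q = (of_real q :: complex)"
  define P where "P n = qpoch a q n * qpoch b q n * qpoch c q n / (qpoch Q q n * qpoch d q n * qpoch e q n)"
    for n
  have P_nonzero: "P n \<noteq> 0" for n
    using params q qpoch_nonzero[of _ q n] by (simp add: P_def Q_def)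
  define N where "N n = (1 - a*Q^n) * (1 - b*Q^n) * (1 - c*Q^n)" for n
  define D where "D n = (1 - Q^Suc n) * (1 - d*Q^n) * (1 - e*Q^n)" for n
  have P_Suc: "P (Suc n) = P n * N n / D n" for n
    by (simp add: P_def N_def D_def qpoch_Suc Q_def mult_ac)
  have step: "t * (A (Suc n) t / P (Suc n)) = A n t / P n - A n (of_real q * t) / P n"
    if "norm t < R" for n t
  proof -
    have "N n \<noteq> 0" "D n \<noteq> 0"
      using P_nonzero[of "Suc n"] by (auto simp: P_Suc)
    have rec: "t * A (Suc n) t * D n = (A n t - A n (of_real q * t)) * N n"
      using q_difference_equation_coeff_recurrence[OF _ _ \<open>R > 0\<close> rep eq that, of n] q
      by (simp add: N_def D_def Q_def mult.commute)
    have "t * (A (Suc n) t / P (Suc n)) = t * A (Suc n) t * D n / (P n * N n)"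
      using \<open>D n \<noteq> 0\<close> by (simp add: P_Suc)
    also have "\<dots> = (A n t - A n (of_real q * t)) * N n / (P n * N n)"
      by (simp only: rec)
    also have "\<dots> = A n t / P n - A n (of_real q * t) / P n"
      using \<open>N n \<noteq> 0\<close> by (simp add: diff_divide_distrib)
    finally show ?thesis .
  qed
  have "(qD q ^^ n) (\<lambda>t. F t 0) x = A n x / P n" for n
  proof (rule qD_iterate_eq[where B = "\<lambda>n t. A n t / P n" and r = R])
    show "A 0 t / P 0 = F t 0" if "norm t < R" for t
      using rep[OF that, of 0] \<open>R > 0\<close> by (simp add: P_def)
  qed (use q cont step xy P_nonzero \<open>R > 0\<close> in \<open>auto intro!: continuous_intros\<close>)
  then have "(\<lambda>n. P n * y^n * (qD q ^^ n) (\<lambda>t. F t 0) x) = (\<lambda>n. A n x * y^n)"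
    using P_nonzero by (simp add: fun_eq_iff)
  with rep[OF xy] show ?thesis
    unfolding Q_def[symmetric] P_def[symmetric] by simp
qed

theorem theorem2:
  fixes f :: "complex \<Rightarrow> complex \<Rightarrow> complex \<Rightarrow> complex \<Rightarrow> complex \<Rightarrow> complex \<Rightarrow> complex \<Rightarrow> complex"
    and q :: real
  assumes q: "0 < q" "q < 1"
    and an: "analytic7 f"
    and eq: "\<exists>r>0. \<forall>a b c d e x y.
      norm a < r \<and> norm b < r \<and> norm c < r \<and> norm d < r \<and> norm e < r \<and> norm x < r \<and> norm y < r \<longrightarrow>
      (let F = f a b c d e; Q = (of_real q :: complex) in
        x * ( F x y - F x (y*Q) - (d + e) / Q * (F x (y*Q) - F x (y*Q^2))
              + d * e / Q^2 * (F x (y*Q^2) - F x (y*Q^3)) )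
      = y * ( (F x y - F (x*Q) y)
              - (a + b + c) * (F x (y*Q) - F (x*Q) (y*Q))
              + (a*b + a*c + b*c) * (F x (y*Q^2) - F (x*Q) (y*Q^2))
              - a*b*c * (F x (y*Q^3) - F (x*Q) (y*Q^3)) ))"
  shows "\<exists>r>0. \<forall>a b c d e x y.
      norm a < r \<and> norm b < r \<and> norm c < r \<and> norm d < r \<and> norm e < r \<and> norm x < r \<and> norm y < r \<longrightarrow>
      (\<lambda>n. qpoch a q n * qpoch b q n * qpoch c q n
              / (qpoch (of_real q) q n * qpoch d q n * qpoch e q n)
            * y ^ n * ((qD q ^^ n) (\<lambda>t. f a b c d e t 0)) x)
      sums f a b c d e x y"
proof -
  obtain r0 A where "r0 > 0"
    and cont: "\<And>a b c d e n. norm a < r0 \<Longrightarrow> norm b < r0 \<Longrightarrow> norm c < r0 \<Longrightarrow> norm d < r0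
       \<Longrightarrow> norm e < r0 \<Longrightarrow> isCont (A a b c d e n) 0"
    and rep: "\<And>a b c d e x y. norm a < r0 \<Longrightarrow> norm b < r0 \<Longrightarrow> norm c < r0 \<Longrightarrow> norm d < r0
       \<Longrightarrow> norm e < r0 \<Longrightarrow> norm x < r0 \<Longrightarrow> norm y < r0
       \<Longrightarrow> (\<lambda>n. A a b c d e n x * y^n) sums f a b c d e x y"
    using analytic7_power_series_in_y[OF an] by blast
  obtain r1 where "r1 > 0" and eq1: "\<forall>a b c d e x y. norm a < r1 \<and> norm b < r1 \<and> norm c < r1
      \<and> norm d < r1 \<and> norm e < r1 \<and> norm x < r1 \<and> norm y < r1
      \<longrightarrow> q_difference_equation (of_real q) a b c d e (f a b c d e) x y"
    using eq unfolding q_difference_equation_def Let_def by blast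
  define R where "R = min 1 (min r0 r1)"
  have "R > 0"
    using \<open>r0 > 0\<close> \<open>r1 > 0\<close> by (simp add: R_def)
  have small: "norm z < 1" "norm z < r0" "norm z < r1" if "norm z < R" for z :: complex
    using that by (simp_all add: R_def)
  show ?thesis
  proof (intro exI[of _ R] conjI allI impI \<open>R > 0\<close>, elim conjE)
    fix a b c d e x y :: complex
    assume "norm a < R" "norm b < R" "norm c < R" "norm d < R" "norm e < R" "norm x < R" "norm y < R"
    then show "(\<lambda>n. qpoch a q n * qpoch b q n * qpoch c q n
              / (qpoch (of_real q) q n * qpoch d q n * qpoch e q n)
            * y ^ n * ((qD q ^^ n) (\<lambda>t. f a b c d e t 0)) x) sums f a b c d e x y"
      by (intro q_difference_equation_expansion[OF q \<open>R > 0\<close>, where A = "A a b c d e"])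
        (simp_all add: small cont rep eq1)
  qed
qed

end
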